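(* Let $K$ be as in the context and let $F=a_1x_1^4+\cdots+a_{11}x_{11}^4$ with all $a_i\in K\setminus\{0\}$. If $F$ is of type $(3,0,2,1)$, then $F$ has a nontrivial zero in $K^{11}$.
   Context: $K$ is one of $\mathbb{Q}_2(\sqrt2),\mathbb{Q}_2(\sqrt{10}),\mathbb{Q}_2(\sqrt{-2}),\mathbb{Q}_2(\sqrt{-10})$, with uniformizer $\pi$ and valuation $v_\pi$. The level of the variable $x_i$ is $v_\pi(a_i)$, considered modulo $4$. For nonnegative integers $s_0,s_1,s_2,s_3$, the form is said to be of type $(s_0,s_1,s_2,s_3)$ if there exists $j\in\mathbb{Z}/4$ such that for each $i\in\{0,1,2,3\}$ the number of variables whose level is congruent to $i+j$ modulo $4$ is at least $s_i$ (so types differing by a cyclic permutation of the entries are the same type). *)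

theory Defs
  imports "HOL-Computational_Algebra.Computational_Algebra"
begin

text \<open>Model of K = Q_2(sqrt d), d in {2,10,-2,-10}: the completion of the number field
Q(sqrt d) with respect to the (unique) prime above 2.  An element u + v sqrt d of Q(sqrt d)
is represented by the pair (u,v) of rationals; an element of K is represented by a Cauchy
sequence of such pairs, two sequences representing the same element iff their difference
is a null sequence.  Field operations on K are the pointwise operations on sequences.\<close>

definition qadd :: "rat \<times> rat \<Rightarrow> rat \<times> rat \<Rightarrow> rat \<times> rat" where
  "qadd x y = (fst x + fst y, snd x + snd y)"

definition qsub :: "rat \<times> rat \<Rightarrow> rat \<times> rat \<Rightarrow> rat \<times> rat" where
  "qsub x y = (fst x - fst y, snd x - snd y)"

definition qmul :: "rat \<Rightarrow> rat \<times> rat \<Rightarrow> rat \<times> rat \<Rightarrow> rat \<times> rat" where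
  "qmul d x y = (fst x * fst y + d * snd x * snd y, fst x * snd y + snd x * fst y)"

definition qpow4 :: "rat \<Rightarrow> rat \<times> rat \<Rightarrow> rat \<times> rat" where
  "qpow4 d x = qmul d (qmul d x x) (qmul d x x)"

definition v2 :: "rat \<Rightarrow> int" where
  "v2 q = (case quotient_of q of (n, m) \<Rightarrow>
              int (multiplicity (2::int) n) - int (multiplicity (2::int) m))"

text \<open>Normalized valuation v_pi on Q(sqrt d) (ramified at 2, v_pi(sqrt d) = 1):
  v_pi(u + v sqrt d) = v_2(norm) = v_2(u^2 - d v^2), for nonzero elements.\<close>
definition vpi :: "rat \<Rightarrow> rat \<times> rat \<Rightarrow> int" where
  "vpi d x = v2 ((fst x)^2 - d * (snd x)^2)"

definition pi_small :: "rat \<Rightarrow> int \<Rightarrow> rat \<times> rat \<Rightarrow> bool" where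
  "pi_small d N x \<longleftrightarrow> x = (0, 0) \<or> vpi d x \<ge> N"

definition K_cauchy :: "rat \<Rightarrow> (nat \<Rightarrow> rat \<times> rat) \<Rightarrow> bool" where
  "K_cauchy d s \<longleftrightarrow> (\<forall>N::int. \<exists>M. \<forall>m\<ge>M. \<forall>n\<ge>M. pi_small d N (qsub (s m) (s n)))"

text \<open>A Cauchy sequence represents 0 in K iff it is null.\<close>
definition K_null :: "rat \<Rightarrow> (nat \<Rightarrow> rat \<times> rat) \<Rightarrow> bool" where
  "K_null d s \<longleftrightarrow> (\<forall>N::int. \<exists>M. \<forall>n\<ge>M. pi_small d N (s n))"

text \<open>v_pi of the element of K represented by a non-null Cauchy sequence
  (the eventually constant value of v_pi along the sequence).\<close>
definition K_val :: "rat \<Rightarrow> (nat \<Rightarrow> rat \<times> rat) \<Rightarrow> int" where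
  "K_val d s = (THE k. \<exists>M. \<forall>n\<ge>M. vpi d (s n) = k)"

definition diag4 :: "rat \<Rightarrow> nat \<Rightarrow> (nat \<Rightarrow> nat \<Rightarrow> rat \<times> rat) \<Rightarrow> (nat \<Rightarrow> nat \<Rightarrow> rat \<times> rat)
                      \<Rightarrow> nat \<Rightarrow> rat \<times> rat" where
  "diag4 d r a x n = ((\<Sum>i<r. fst (qmul d (a i n) (qpow4 d (x i n)))),
                      (\<Sum>i<r. snd (qmul d (a i n) (qpow4 d (x i n)))))"

definition of_type :: "rat \<Rightarrow> nat \<Rightarrow> (nat \<Rightarrow> nat \<Rightarrow> rat \<times> rat) \<Rightarrow> nat \<Rightarrow> nat \<Rightarrow> nat \<Rightarrow> nat \<Rightarrow> bool" where
  "of_type d r a s0 s1 s2 s3 \<longleftrightarrow>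
     (\<exists>j::int.
        card {i. i < r \<and> K_val d (a i) mod 4 = j mod 4} \<ge> s0 \<and>
        card {i. i < r \<and> K_val d (a i) mod 4 = (j + 1) mod 4} \<ge> s1 \<and>
        card {i. i < r \<and> K_val d (a i) mod 4 = (j + 2) mod 4} \<ge> s2 \<and>
        card {i. i < r \<and> K_val d (a i) mod 4 = (j + 3) mod 4} \<ge> s3)"

end

theory Submission
  imports Defs "HOL-Library.Product_Plus"
begin

text \<open>Rescaling a variable by \<open>\<pi>\<^sup>q\<close> moves its level by \<open>4q\<close>, and dividing the form by \<open>\<pi>\<^sup>j\<close>
  moves all levels by \<open>j\<close>; so six of the variables may be assumed to have coefficients of valuation
  exactly \<open>0, 0, 0, 2, 2, 3\<close>, the remaining ones being set to \<open>0\<close>. As the residue field is \<open>\<bbbF>\<^sub>2\<close>,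
  two of the three unit coefficients have a sum divisible by \<open>\<pi>\<^sup>2\<close>. Using the fourth powers
  \<open>1\<close>, \<open>\<pi>\<^sup>4\<close> and \<open>(1 + \<pi>)\<^sup>4 \<equiv> 1 + \<epsilon> \<pi>\<^sup>5\<close> (\<open>\<epsilon>\<close> a unit), the other coefficients then kill the
  \<open>\<pi>\<close>-adic digits of the value one at a time, up to \<open>\<pi>\<^sup>7\<close>. A zero modulo \<open>\<pi>\<^sup>7\<close> in which a unit
  coefficient carries the value \<open>1\<close> lifts to a zero by the iteration \<open>X \<mapsto> X - F(X)/4\<close>, which gains a
  power of \<open>\<pi>\<close> per step. Elements of \<open>K\<close> are Cauchy sequences, so everything is done termwise
  and the Newton iterates are taken along the diagonal.\<close>

section \<open>The 2-adic valuation on \<open>\<rat>\<close>\<close>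

definition v2_int :: "int \<Rightarrow> int" where
  "v2_int x = int (multiplicity 2 x)"

lemma v2_int_mult: "x \<noteq> 0 \<Longrightarrow> y \<noteq> 0 \<Longrightarrow> v2_int (x * y) = v2_int x + v2_int y"
  unfolding v2_int_def by (simp add: prime_elem_multiplicity_mult_distrib)

lemma pow2_dvd_iff_le_v2_int: "x \<noteq> 0 \<Longrightarrow> (2::int) ^ k dvd x \<longleftrightarrow> int k \<le> v2_int x"
  unfolding v2_int_def by (subst power_dvd_iff_le_multiplicity) auto

lemma v2_int_pow2_mult_odd: "\<not> 2 dvd w \<Longrightarrow> v2_int (2 ^ k * w) = int k"
  unfolding v2_int_def by (subst multiplicity_decomposeI[of _ 2 k w]) auto

lemma rat_eq_int_quotient:
  fixes q :: rat
  assumes "q \<noteq> 0"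
  obtains n m :: int where "n \<noteq> 0" "m \<noteq> 0" "q = of_int n / of_int m"
proof -
  obtain n m where qnm: "quotient_of q = (n, m)" by (cases "quotient_of q")
  show thesis using quotient_of_div[OF qnm] quotient_of_denom_pos[OF qnm] assms
    by (intro that[of n m]) auto
qed

lemma v2_int_quotient:
  assumes "n \<noteq> 0" "m \<noteq> 0"
  shows "v2 (of_int n / of_int m) = v2_int n - v2_int m"
proof -
  obtain n0 m0 where q: "quotient_of (of_int n / of_int m) = (n0, m0)"
    by (cases "quotient_of (of_int n / of_int m)")
  have m0: "m0 > 0" using quotient_of_denom_pos[OF q] .
  have "(of_int n / of_int m :: rat) = of_int n0 / of_int m0" using quotient_of_div[OF q] .
  hence "(of_int (n * m0) :: rat) = of_int (n0 * m)" using assms m0 by (simp add: field_simps)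
  hence cross: "n * m0 = n0 * m" by (simp only: of_int_eq_iff)
  hence "n0 \<noteq> 0" using assms m0 by auto
  hence "v2_int n + v2_int m0 = v2_int n0 + v2_int m" using cross assms m0 by (metis v2_int_mult less_irrefl)
  thus ?thesis unfolding v2_def q v2_int_def by simp
qed

lemma v2_of_int: "n \<noteq> 0 \<Longrightarrow> v2 (of_int n) = v2_int n"
  using v2_int_quotient[of n 1] by (simp add: v2_int_def)

lemma v2_of_int_pow2_mult_odd: "\<not> 2 dvd w \<Longrightarrow> v2 (of_int (2 ^ k * w)) = int k"
  using v2_of_int[of "2 ^ k * w"] v2_int_pow2_mult_odd[of w k] by (cases "w = 0") auto

lemma v2_mult:
  assumes "a \<noteq> 0" "b \<noteq> 0"
  shows "v2 (a * b) = v2 a + v2 b"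
proof -
  obtain n m where a: "n \<noteq> 0" "m \<noteq> 0" "a = of_int n / of_int m" using rat_eq_int_quotient assms by blast
  obtain n' m' where b: "n' \<noteq> 0" "m' \<noteq> 0" "b = of_int n' / of_int m'" using rat_eq_int_quotient assms by blast
  have ab: "a * b = of_int (n * n') / of_int (m * m')" using a b by simp
  have "v2 (a * b) = v2_int (n * n') - v2_int (m * m')"
    unfolding ab by (rule v2_int_quotient) (use a b in auto)
  thus ?thesis using v2_int_quotient v2_int_mult a b by simp
qed

lemma v2_uminus: "v2 (- a) = v2 a"
proof (cases "a = 0")
  case False
  obtain n m where a: "n \<noteq> 0" "m \<noteq> 0" "a = of_int n / of_int m" using rat_eq_int_quotient False by blast
  have na: "- a = of_int (- n) / of_int m" using a by simp
  have "v2 (- a) = v2_int (- n) - v2_int m"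
    unfolding na by (rule v2_int_quotient) (use a in auto)
  thus ?thesis using v2_int_quotient[OF a(1,2)] a(3) by (simp add: v2_int_def)
qed simp

lemma v2_inverse: "v2 (inverse a) = - v2 a"
proof (cases "a = 0")
  case False
  obtain n m where a: "n \<noteq> 0" "m \<noteq> 0" "a = of_int n / of_int m" using rat_eq_int_quotient False by blast
  have "inverse a = of_int m / of_int n" using a by simp
  thus ?thesis using v2_int_quotient a by simp
qed (simp add: v2_def)

definition v2_ge :: "int \<Rightarrow> rat \<Rightarrow> bool" where
  "v2_ge k q \<longleftrightarrow> q = 0 \<or> k \<le> v2 q"

lemma v2_ge_uminus [simp]: "v2_ge k (- a) = v2_ge k a"
  by (simp add: v2_ge_def v2_uminus)

text \<open>Both the ultrametric inequality and its sharpening for summands of equal valuation are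
  reduced to divisibility by powers of 2 of the numerator of the sum over a common denominator.\<close>

lemma common_denominator_sum:
  assumes "a \<noteq> 0" "b \<noteq> 0" "a + b \<noteq> 0"
  obtains n m n' m' :: int where "n \<noteq> 0" "m \<noteq> 0" "n' \<noteq> 0" "m' \<noteq> 0" "n * m' + n' * m \<noteq> 0"
    "v2 a = v2_int n - v2_int m" "v2 b = v2_int n' - v2_int m'"
    "v2 (a + b) = v2_int (n * m' + n' * m) - v2_int m - v2_int m'"
proof -
  obtain n m where a: "n \<noteq> 0" "m \<noteq> 0" "a = of_int n / of_int m" using rat_eq_int_quotient assms by blast
  obtain n' m' where b: "n' \<noteq> 0" "m' \<noteq> 0" "b = of_int n' / of_int m'" using rat_eq_int_quotient assms by blast
  have sum: "a + b = of_int (n * m' + n' * m) / of_int (m * m')" using a b by (simp add: field_simps)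
  have nz: "n * m' + n' * m \<noteq> 0" by (metis assms(3) sum div_0 of_int_0)
  have "v2 (a + b) = v2_int (n * m' + n' * m) - v2_int (m * m')"
    unfolding sum by (rule v2_int_quotient) (use nz a b in auto)
  hence "v2 (a + b) = v2_int (n * m' + n' * m) - v2_int m - v2_int m'"
    using v2_int_mult[OF a(2) b(2)] by simp
  moreover have "v2 a = v2_int n - v2_int m" using v2_int_quotient[OF a(1,2)] a(3) by simp
  moreover have "v2 b = v2_int n' - v2_int m'" using v2_int_quotient[OF b(1,2)] b(3) by simp
  ultimately show thesis using that[OF a(1,2) b(1,2) nz] by blast
qed

lemma v2_ge_add:
  assumes "v2_ge k a" "v2_ge k b"
  shows "v2_ge k (a + b)"
proof (cases "a = 0 \<or> b = 0 \<or> a + b = 0")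
  case nonzero: False
  then obtain n m n' m' where nm: "n \<noteq> 0" "m \<noteq> 0" "n' \<noteq> 0" "m' \<noteq> 0" "n * m' + n' * m \<noteq> 0"
    "v2 a = v2_int n - v2_int m" "v2 b = v2_int n' - v2_int m'"
    "v2 (a + b) = v2_int (n * m' + n' * m) - v2_int m - v2_int m'"
    using common_denominator_sum by blast
  define E where "E = k + v2_int m + v2_int m'"
  have "E \<le> v2_int (n * m' + n' * m)"
  proof (cases "E \<le> 0")
    case True thus ?thesis by (simp add: v2_int_def)
  next
    case False
    have "k \<le> v2 a" "k \<le> v2 b" using assms nonzero by (auto simp: v2_ge_def)
    hence "E \<le> v2_int (n * m')" "E \<le> v2_int (n' * m)"
      using nm(6,7) v2_int_mult[OF nm(1,4)] v2_int_mult[OF nm(3,2)] unfolding E_def by linarith+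
    hence "(2::int) ^ nat E dvd n * m'" "(2::int) ^ nat E dvd n' * m"
      using pow2_dvd_iff_le_v2_int[of "n * m'" "nat E"] pow2_dvd_iff_le_v2_int[of "n' * m" "nat E"]
        nm(1-4) False by simp_all
    hence "(2::int) ^ nat E dvd n * m' + n' * m" by (rule dvd_add)
    thus ?thesis using pow2_dvd_iff_le_v2_int[OF nm(5), of "nat E"] False by simp
  qed
  hence "k \<le> v2 (a + b)" using nm(8) by (simp add: E_def)
  thus ?thesis by (simp add: v2_ge_def)
qed (use assms in \<open>auto simp: v2_ge_def\<close>)

lemma v2_ge_add_same_v2:
  assumes "a \<noteq> 0" "b \<noteq> 0" "v2 a = k" "v2 b = k"
  shows "v2_ge (k + 1) (a + b)"
proof (cases "a + b = 0")
  case False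
  then obtain n m n' m' where nm: "n \<noteq> 0" "m \<noteq> 0" "n' \<noteq> 0" "m' \<noteq> 0" "n * m' + n' * m \<noteq> 0"
    "v2 a = v2_int n - v2_int m" "v2 b = v2_int n' - v2_int m'"
    "v2 (a + b) = v2_int (n * m' + n' * m) - v2_int m - v2_int m'"
    using common_denominator_sum assms by blast
  obtain o1 where o1: "n * m' = 2 ^ multiplicity 2 (n * m') * o1" "\<not> 2 dvd o1"
    using multiplicity_decompose'[of "n * m'" "2::int"] nm by auto
  obtain o2 where o2: "n' * m = 2 ^ multiplicity 2 (n' * m) * o2" "\<not> 2 dvd o2"
    using multiplicity_decompose'[of "n' * m" "2::int"] nm by auto
  have "v2_int (n' * m) = v2_int (n * m')" using assms nm by (simp add: v2_int_mult)
  hence "multiplicity 2 (n' * m) = multiplicity 2 (n * m')" by (simp add: v2_int_def)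
  hence "n * m' + n' * m = 2 ^ multiplicity 2 (n * m') * (o1 + o2)"
    using o1 o2 by (simp add: algebra_simps)
  moreover have "2 dvd o1 + o2" using o1(2) o2(2) by presburger
  ultimately have "2 ^ Suc (multiplicity 2 (n * m')) dvd n * m' + n' * m" by auto
  hence "v2_int (n * m') + 1 \<le> v2_int (n * m' + n' * m)"
    using pow2_dvd_iff_le_v2_int[OF nm(5), of "Suc (multiplicity 2 (n * m'))"] by (simp add: v2_int_def)
  hence "k + 1 \<le> v2 (a + b)" using assms(3) nm(6,8) v2_int_mult[OF nm(1,4)] by simp
  thus ?thesis by (simp add: v2_ge_def)
qed (simp add: v2_ge_def)

lemma v2_add_less:
  assumes "a \<noteq> 0" "b = 0 \<or> v2 a < v2 b"
  shows "a + b \<noteq> 0 \<and> v2 (a + b) = v2 a"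
proof (cases "b = 0")
  case False
  hence lt: "v2 a < v2 b" using assms by simp
  have "v2_ge (v2 a) (a + b)" using lt by (intro v2_ge_add) (auto simp: v2_ge_def)
  moreover have "\<not> v2_ge (v2 a + 1) (a + b)"
  proof
    assume "v2_ge (v2 a + 1) (a + b)"
    moreover have "v2_ge (v2 a + 1) (- b)" using lt by (simp add: v2_ge_def v2_uminus)
    ultimately have "v2_ge (v2 a + 1) ((a + b) + - b)" by (rule v2_ge_add)
    thus False using assms(1) by (simp add: v2_ge_def)
  qed
  ultimately show ?thesis by (auto simp: v2_ge_def)
qed (use assms in simp)

section \<open>Selecting six variables of prescribed levels\<close>

definition level_3021 :: "nat \<Rightarrow> int" where
  "level_3021 m = (if m < 3 then 0 else if m < 5 then 2 else 3)"

lemma diag4_eq_sum: "diag4 d r a x n = (\<Sum>i<r. qmul d (a i n) (qpow4 d (x i n)))"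
  unfolding diag4_def by (simp add: fst_sum snd_sum prod_eq_iff)

lemma diag4_extend_by_zero:
  assumes inj: "inj_on idx {..<k}" and sub: "idx ` {..<k} \<subseteq> {..<r}"
    and x: "\<And>m. m < k \<Longrightarrow> x (idx m) = Y m" "\<And>i. i \<notin> idx ` {..<k} \<Longrightarrow> x i = (\<lambda>n. 0)"
  shows "diag4 d r a x n = (\<Sum>m<k. qmul d (a (idx m) n) (qpow4 d (Y m n)))"
proof -
  have "diag4 d r a x n = (\<Sum>i\<in>idx ` {..<k}. qmul d (a i n) (qpow4 d (x i n)))"
    unfolding diag4_eq_sum
    by (rule sum.mono_neutral_right) (use sub x(2) in \<open>auto simp: qpow4_def qmul_def zero_prod_def\<close>)
  also have "\<dots> = (\<Sum>m<k. qmul d (a (idx m) n) (qpow4 d (x (idx m) n)))"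
    by (rule sum.reindex[OF inj, unfolded comp_def])
  finally show ?thesis using x(1) by simp
qed

lemma sum_lessThan_6_permute:
  fixes f :: "nat \<Rightarrow> 'a::comm_monoid_add"
  assumes ijk: "{i, j, k} = {0, 1, 2}" "distinct [i, j, k]"
  shows "(\<Sum>m<6. f m) = f 3 + f 4 + f 5 + (f i + f j + f k)"
proof -
  have U: "{..<6::nat} = {3, 4, 5} \<union> {i, j, k}" unfolding ijk(1) by auto
  have "(\<Sum>m<6. f m) = (\<Sum>m\<in>{3, 4, 5}. f m) + (\<Sum>m\<in>{i, j, k}. f m)"
    unfolding U by (rule sum.union_disjoint) (auto simp: ijk(1))
  thus ?thesis using ijk(2) by (simp add: add.assoc)
qed

lemma eventually_forall_lessThan:
  fixes P :: "nat \<Rightarrow> nat \<Rightarrow> bool"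
  assumes "\<And>m. m < k \<Longrightarrow> \<exists>M. \<forall>n\<ge>M. P m n"
  shows "\<exists>M. \<forall>n\<ge>M. \<forall>m<k. P m n"
proof -
  have "eventually (\<lambda>n. \<forall>m\<in>{..<k}. P m n) sequentially"
    using assms by (intro eventually_ball_finite) (auto simp: eventually_sequentially)
  thus ?thesis unfolding eventually_sequentially by auto
qed

lemma select_level_3021:
  fixes lv :: "nat \<Rightarrow> int"
  assumes "card {i. i < r \<and> lv i mod 4 = j mod 4} \<ge> 3"
    and "card {i. i < r \<and> lv i mod 4 = (j + 2) mod 4} \<ge> 2"
    and "card {i. i < r \<and> lv i mod 4 = (j + 3) mod 4} \<ge> 1"
  obtains idx where "inj_on idx {..<6}" "idx ` {..<6} \<subseteq> {..<r}"
    "\<forall>m<6. lv (idx m) mod 4 = (j + level_3021 m) mod 4"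
proof -
  define S where "S l = {i. i < r \<and> lv i mod 4 = (j + l) mod 4}" for l
  have card: "3 \<le> card (S 0)" "2 \<le> card (S 2)" "1 \<le> card (S 3)" using assms by (simp_all add: S_def)
  obtain T0 where T0: "T0 \<subseteq> S 0" "card T0 = 3" "finite T0" using obtain_subset_with_card_n[OF card(1)] .
  obtain T2 where T2: "T2 \<subseteq> S 2" "card T2 = 2" "finite T2" using obtain_subset_with_card_n[OF card(2)] .
  obtain T3 where T3: "T3 \<subseteq> S 3" "card T3 = 1" "finite T3" using obtain_subset_with_card_n[OF card(3)] .
  have "j mod 4 \<noteq> (j + 2) mod 4" "j mod 4 \<noteq> (j + 3) mod 4" "(j + 2) mod 4 \<noteq> (j + 3) mod 4"
    by presburger+
  hence disj: "T0 \<inter> T2 = {}" "T0 \<inter> T3 = {}" "T2 \<inter> T3 = {}"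
    using T0(1) T2(1) T3(1) unfolding S_def by fastforce+
  define l0 l2 l3 where "l0 = sorted_list_of_set T0" "l2 = sorted_list_of_set T2" "l3 = sorted_list_of_set T3"
  have lists: "set l0 = T0" "length l0 = 3" "set l2 = T2" "length l2 = 2" "set l3 = T3" "length l3 = 1"
    "distinct l0" "distinct l2" "distinct l3"
    using T0 T2 T3 by (simp_all add: l0_l2_l3_def)
  define xs where "xs = l0 @ l2 @ l3"
  have len: "length xs = 6" using lists by (simp add: xs_def)
  have "distinct xs" using lists disj by (auto simp: xs_def)
  hence "inj_on (\<lambda>m. xs ! m) {..<6}" using len by (simp add: inj_on_def nth_eq_iff_index_eq)
  moreover have "xs ! m \<in> S (level_3021 m)" if "m < 6" for m
  proof -
    consider "m < 3" | "3 \<le> m" "m < 5" | "m = 5" using \<open>m < 6\<close> by linarith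
    thus ?thesis
    proof cases
      case 1
      hence "xs ! m = l0 ! m" using lists by (simp add: xs_def nth_append)
      thus ?thesis using 1 lists T0(1) nth_mem[of m l0] by (auto simp: level_3021_def)
    next
      case 2
      hence "xs ! m = l2 ! (m - 3)" using lists by (auto simp: xs_def nth_append)
      thus ?thesis using 2 lists T2(1) nth_mem[of "m - 3" l2] by (auto simp: level_3021_def)
    next
      case 3
      hence "xs ! m = l3 ! 0" using lists by (simp add: xs_def nth_append)
      thus ?thesis using 3 lists T3(1) nth_mem[of 0 l3] by (auto simp: level_3021_def)
    qed
  qed
  ultimately show thesis by (intro that[of "\<lambda>m. xs ! m"]) (auto simp: S_def)
qed

section \<open>The valuation ring of \<open>\<rat>\<^sub>2(\<surd>d)\<close> in coordinates\<close>

abbreviation scalar :: "rat \<Rightarrow> rat \<times> rat" where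
  "scalar c \<equiv> (c, 0)"

locale Q2_sqrt =
  fixes d :: rat
  assumes d_cases: "d \<in> {2, 10, -2, -10}"
begin

lemma v2_d: "v2 d = 1"
  using d_cases v2_of_int_pow2_mult_odd[of 1 1] v2_of_int_pow2_mult_odd[of 5 1] v2_uminus[of 2]
    v2_uminus[of 10] by auto

lemma d_nonzero: "d \<noteq> 0"
  using d_cases by auto

abbreviation small :: "int \<Rightarrow> rat \<times> rat \<Rightarrow> bool" where
  "small N x \<equiv> pi_small d N x"

abbreviation mul :: "rat \<times> rat \<Rightarrow> rat \<times> rat \<Rightarrow> rat \<times> rat" (infixl "\<cdot>" 70) where
  "x \<cdot> y \<equiv> qmul d x y"

lemma v2_d_mult_square: "v \<noteq> 0 \<Longrightarrow> v2 (d * v\<^sup>2) = 1 + 2 * v2 v"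
  using v2_mult[of d "v\<^sup>2"] v2_mult[of v v] d_nonzero v2_d by (simp add: power2_eq_square)

lemma v2_square: "u \<noteq> 0 \<Longrightarrow> v2 (u\<^sup>2) = 2 * v2 u"
  using v2_mult[of u u] by (simp add: power2_eq_square)

text \<open>The two summands of the norm have valuations of different parity, so the norm form
  is anisotropic and its valuation is the smaller of the two.\<close>

lemma vpi_eq_min:
  assumes "u \<noteq> 0" "v \<noteq> 0"
  shows "vpi d (u, v) = min (2 * v2 u) (1 + 2 * v2 v)"
proof -
  have vp: "vpi d (u, v) = v2 (u\<^sup>2 + - (d * v\<^sup>2))" by (simp add: vpi_def)
  have a: "v2 (u\<^sup>2) = 2 * v2 u" using v2_square assms by simp
  have b: "v2 (- (d * v\<^sup>2)) = 1 + 2 * v2 v" using v2_d_mult_square assms by (simp add: v2_uminus)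
  show ?thesis
  proof (cases "2 * v2 u < 1 + 2 * v2 v")
    case True
    thus ?thesis using v2_add_less[of "u\<^sup>2" "- (d * v\<^sup>2)"] a b assms vp by simp
  next
    case False
    hence "1 + 2 * v2 v < 2 * v2 u" by presburger
    thus ?thesis using v2_add_less[of "- (d * v\<^sup>2)" "u\<^sup>2"] a b assms d_nonzero vp
      by (simp add: add.commute)
  qed
qed

lemma norm_nonzero:
  assumes "x \<noteq> 0"
  shows "(fst x)\<^sup>2 - d * (snd x)\<^sup>2 \<noteq> 0"
proof (cases "fst x = 0 \<or> snd x = 0")
  case True thus ?thesis using assms d_nonzero by (auto simp: zero_prod_def prod_eq_iff)
next
  case False
  hence "v2 ((fst x)\<^sup>2) \<noteq> v2 (d * (snd x)\<^sup>2)" using v2_square v2_d_mult_square by presburger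
  thus ?thesis by auto
qed

lemma vpi_ge_iff:
  assumes "(u, v) \<noteq> (0, 0)"
  shows "N \<le> vpi d (u, v) \<longleftrightarrow> v2_ge ((N + 1) div 2) u \<and> v2_ge (N div 2) v"
proof -
  consider "u = 0" "v \<noteq> 0" | "u \<noteq> 0" "v = 0" | "u \<noteq> 0" "v \<noteq> 0" using assms by auto
  thus ?thesis
  proof cases
    case 1
    hence "vpi d (u, v) = 1 + 2 * v2 v" using v2_d_mult_square by (simp add: vpi_def v2_uminus)
    thus ?thesis using 1 by (auto simp: v2_ge_def; presburger)
  next
    case 2
    hence "vpi d (u, v) = 2 * v2 u" using v2_square by (simp add: vpi_def)
    thus ?thesis using 2 by (auto simp: v2_ge_def; presburger)
  next
    case 3
    thus ?thesis using vpi_eq_min by (auto simp: v2_ge_def; presburger)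
  qed
qed

lemma small_iff: "small N x \<longleftrightarrow> v2_ge ((N + 1) div 2) (fst x) \<and> v2_ge (N div 2) (snd x)"
  by (cases x; cases "x = (0, 0)") (auto simp: pi_small_def vpi_ge_iff v2_ge_def)

lemma small_zero [simp]: "small N 0"
  by (simp add: pi_small_def zero_prod_def)

lemma small_add: "small N x \<Longrightarrow> small N y \<Longrightarrow> small N (x + y)"
  by (simp add: small_iff v2_ge_add)

lemma small_uminus [simp]: "small N (- x) = small N x"
  by (simp add: small_iff)

lemma small_diff: "small N x \<Longrightarrow> small N y \<Longrightarrow> small N (x - y)"
  using small_add[of N x "- y"] by simp

lemma small_mono: "small N x \<Longrightarrow> M \<le> N \<Longrightarrow> small M x"
  by (auto simp: pi_small_def)

lemma small_exists: "\<exists>N. small N x"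
  by (auto simp: pi_small_def)

lemma small_sum: "(\<And>m. m \<in> S \<Longrightarrow> small N (f m)) \<Longrightarrow> small N (sum f S)"
  by (induction S rule: infinite_finite_induct) (simp_all add: small_add)

definition exact_val :: "int \<Rightarrow> rat \<times> rat \<Rightarrow> bool" where
  "exact_val k x \<longleftrightarrow> small k x \<and> \<not> small (k + 1) x"

lemma exact_val_iff: "exact_val k x \<longleftrightarrow> x \<noteq> 0 \<and> vpi d x = k"
  by (auto simp: exact_val_def pi_small_def zero_prod_def)

lemma exact_val_imp_small: "exact_val k x \<Longrightarrow> small k x"
  by (simp add: exact_val_def)

lemma exact_val_uminus [simp]: "exact_val k (- x) = exact_val k x"
  by (simp add: exact_val_def)

lemma exact_val_add_small:
  assumes "exact_val k x" "small (k + 1) y"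
  shows "exact_val k (x + y)"
proof -
  have "small k (x + y)" using assms small_add[of k x y] small_mono[of "k + 1" y k] by (auto simp: exact_val_def)
  moreover have "\<not> small (k + 1) (x + y)"
  proof
    assume "small (k + 1) (x + y)"
    hence "small (k + 1) ((x + y) - y)" using small_diff assms(2) by blast
    thus False using assms(1) by (simp add: exact_val_def)
  qed
  ultimately show ?thesis by (simp add: exact_val_def)
qed

text \<open>The residue field is \<open>\<bbbF>\<^sub>2\<close>: two elements of the same valuation are congruent
  modulo the next power of \<open>\<pi>\<close>.\<close>

lemma exact_val_add_exact_val:
  assumes "exact_val k x" "exact_val k y"
  shows "small (k + 1) (x + y)"
proof -
  have v2_exact: "v2_ge (k + 1) (a + b)"
    if "v2_ge k a" "\<not> v2_ge (k + 1) a" "v2_ge k b" "\<not> v2_ge (k + 1) b" for k a b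
    using that v2_ge_add_same_v2[of a b k] by (auto simp: v2_ge_def)
  have hx: "v2_ge ((k + 1) div 2) (fst x)" "v2_ge (k div 2) (snd x)"
    "\<not> (v2_ge ((k + 2) div 2) (fst x) \<and> v2_ge ((k + 1) div 2) (snd x))"
    using assms(1) by (auto simp: exact_val_def small_iff add.assoc)
  have hy: "v2_ge ((k + 1) div 2) (fst y)" "v2_ge (k div 2) (snd y)"
    "\<not> (v2_ge ((k + 2) div 2) (fst y) \<and> v2_ge ((k + 1) div 2) (snd y))"
    using assms(2) by (auto simp: exact_val_def small_iff add.assoc)
  show ?thesis
  proof (cases "even k")
    case True
    hence e: "(k + 1) div 2 = k div 2" "(k + 2) div 2 = k div 2 + 1" by presburger+
    have "v2_ge (k div 2 + 1) (fst x + fst y)" using v2_exact[of "k div 2"] hx hy e by auto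
    moreover have "v2_ge (k div 2) (snd x + snd y)" using v2_ge_add hx hy by auto
    ultimately show ?thesis using e by (simp add: small_iff add.assoc)
  next
    case False
    hence e: "(k + 1) div 2 = k div 2 + 1" "(k + 2) div 2 = k div 2 + 1" by presburger+
    have "v2_ge (k div 2 + 1) (snd x + snd y)" using v2_exact[of "k div 2"] hx hy e by auto
    moreover have "v2_ge (k div 2 + 1) (fst x + fst y)" using v2_ge_add hx hy e by auto
    ultimately show ?thesis using e by (simp add: small_iff add.assoc)
  qed
qed

lemma norm_mult:
  "(fst (x \<cdot> y))\<^sup>2 - d * (snd (x \<cdot> y))\<^sup>2 = ((fst x)\<^sup>2 - d * (snd x)\<^sup>2) * ((fst y)\<^sup>2 - d * (snd y)\<^sup>2)"
  by (simp add: qmul_def power2_eq_square algebra_simps)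

lemma mul_nonzero: "x \<noteq> 0 \<Longrightarrow> y \<noteq> 0 \<Longrightarrow> x \<cdot> y \<noteq> 0"
  using norm_nonzero[of x] norm_nonzero[of y] norm_mult[of x y] by (auto simp: zero_prod_def)

lemma vpi_mult: "x \<noteq> 0 \<Longrightarrow> y \<noteq> 0 \<Longrightarrow> vpi d (x \<cdot> y) = vpi d x + vpi d y"
  using norm_nonzero[of x] norm_nonzero[of y] norm_mult[of x y] v2_mult by (simp add: vpi_def)

lemma small_mul: "small M x \<Longrightarrow> small N y \<Longrightarrow> small (M + N) (x \<cdot> y)"
  using vpi_mult[of x y] mul_nonzero[of x y]
  by (cases "x = 0 \<or> y = 0") (auto simp: pi_small_def zero_prod_def qmul_def)

lemma exact_val_mul: "exact_val k x \<Longrightarrow> exact_val l y \<Longrightarrow> exact_val (k + l) (x \<cdot> y)"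
  using mul_nonzero vpi_mult by (auto simp: exact_val_iff)

section \<open>Ring identities via the embedding into \<open>\<complex>\<close>\<close>

definition sqrt_d :: complex where
  "sqrt_d = csqrt (of_rat d)"

lemma sqrt_d_square: "sqrt_d\<^sup>2 = of_rat d"
  unfolding sqrt_d_def by (simp add: power2_csqrt)

lemma sqrt_d_nonzero: "sqrt_d \<noteq> 0"
  using sqrt_d_square d_nonzero by (metis of_rat_eq_0_iff power_zero_numeral)

definition embed :: "rat \<times> rat \<Rightarrow> complex" where
  "embed x = of_rat (fst x) + of_rat (snd x) * sqrt_d"

lemma embed_add: "embed (x + y) = embed x + embed y"
  by (simp add: embed_def of_rat_add algebra_simps)

lemma embed_diff: "embed (x - y) = embed x - embed y"
  by (simp add: embed_def of_rat_diff algebra_simps)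

lemma embed_zero: "embed 0 = 0"
  by (simp add: embed_def)

lemma embed_scalar: "embed (scalar c) = of_rat c"
  by (simp add: embed_def)

lemma embed_mul: "embed (x \<cdot> y) = embed x * embed y"
proof -
  have "embed (x \<cdot> y) = of_rat (fst x) * of_rat (fst y) + of_rat d * of_rat (snd x) * of_rat (snd y)
        + (of_rat (fst x) * of_rat (snd y) + of_rat (snd x) * of_rat (fst y)) * sqrt_d"
    by (simp add: embed_def qmul_def of_rat_add of_rat_mult)
  also have "\<dots> = embed x * embed y"
    unfolding embed_def sqrt_d_square[symmetric] by (simp add: power2_eq_square algebra_simps)
  finally show ?thesis .
qed

lemma embed_qpow4: "embed (qpow4 d x) = (embed x) ^ 4"
  by (simp add: qpow4_def embed_mul power4_eq_xxxx)

lemma embed_sum: "embed (sum f A) = (\<Sum>i\<in>A. embed (f i))"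
  by (induction A rule: infinite_finite_induct) (simp_all add: embed_zero embed_add)

lemma embed_inj:
  assumes "embed x = embed y"
  shows "x = y"
proof -
  obtain u v where uv: "x - y = (u, v)" by (cases "x - y")
  have "of_rat u + of_rat v * sqrt_d = 0" using assms embed_diff[of x y] uv by (simp add: embed_def)
  hence "(of_rat u)\<^sup>2 = (of_rat v * sqrt_d)\<^sup>2" by (simp add: eq_neg_iff_add_eq_0[symmetric])
  hence "of_rat (u\<^sup>2) = (of_rat (d * v\<^sup>2) :: complex)"
    using sqrt_d_square by (simp add: of_rat_mult of_rat_power power_mult_distrib mult.commute)
  hence "u\<^sup>2 - d * v\<^sup>2 = 0" using of_rat_eq_iff by fastforce
  hence "x - y = 0" using norm_nonzero[of "x - y"] uv by auto
  thus ?thesis by simp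
qed

lemma qmul_sum_distrib_left: "c \<cdot> sum f S = (\<Sum>m\<in>S. c \<cdot> f m)"
  by (rule embed_inj) (simp add: embed_mul embed_sum sum_distrib_left)

lemma qmul_left_diff_distrib: "(a - b) \<cdot> c = a \<cdot> c - b \<cdot> c"
  by (rule embed_inj) (simp add: embed_mul embed_diff algebra_simps)

lemma qmul_right_diff_distrib: "a \<cdot> (b - c) = a \<cdot> b - a \<cdot> c"
  by (rule embed_inj) (simp add: embed_mul embed_diff algebra_simps)

lemma qmul_scalar_one [simp]: "a \<cdot> scalar 1 = a"
  by (simp add: qmul_def)

lemma qmul_zero_right [simp]: "a \<cdot> 0 = 0"
  by (simp add: qmul_def zero_prod_def)

lemma qpow4_scalar [simp]: "qpow4 d (scalar c) = scalar (c ^ 4)"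
  by (simp add: qpow4_def qmul_def power4_eq_xxxx)

lemma qpow4_zero [simp]: "qpow4 d 0 = 0"
  by (simp add: qpow4_def qmul_def zero_prod_def)

lemma small_scalar_iff: "small N (scalar c) \<longleftrightarrow> v2_ge ((N + 1) div 2) c"
  using small_iff[of N "scalar c"] by (simp add: v2_ge_def)

lemma exact_val_one: "exact_val 0 (scalar 1)"
  using v2_of_int[of 1] v2_int_pow2_mult_odd[of 1 0] by (simp add: exact_val_def small_scalar_iff v2_ge_def)

section \<open>Newton iteration\<close>

lemma small_newton_coefficients:
  "small (-4) (scalar (1/4))" "small (-6) (scalar (3/8))"
  "small (-8) (scalar (-1/16))" "small (-16) (scalar (1/256))"
proof -
  have v: "v2 (of_int w / of_int (2 ^ k)) = - int k" if "\<not> 2 dvd w" for w :: int and k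
    using v2_int_quotient[of w "2 ^ k"] v2_int_pow2_mult_odd[of w 0] v2_int_pow2_mult_odd[of 1 k] that
    by (cases "w = 0") auto
  show "small (-4) (scalar (1/4))" using v[of 1 2] by (simp add: small_scalar_iff v2_ge_def)
  show "small (-6) (scalar (3/8))" using v[of 3 3] by (simp add: small_scalar_iff v2_ge_def)
  show "small (-8) (scalar (-1/16))" using v[of "-1" 4] by (simp add: small_scalar_iff v2_ge_def)
  show "small (-16) (scalar (1/256))" using v[of 1 8] by (simp add: small_scalar_iff v2_ge_def)
qed

definition quartic :: "rat \<times> rat \<Rightarrow> rat \<times> rat \<Rightarrow> rat \<times> rat \<Rightarrow> rat \<times> rat" where
  "quartic A R X = A \<cdot> qpow4 d X + R"

text \<open>The derivative of the quartic is \<open>4 A X\<^sup>3\<close> with \<open>A X\<^sup>3 \<equiv> 1 (mod \<pi>)\<close> along the iteration,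
  so dividing by \<open>4\<close> instead of the derivative still gains a power of \<open>\<pi>\<close> in each step.\<close>

definition newton_step :: "rat \<times> rat \<Rightarrow> rat \<times> rat \<Rightarrow> rat \<times> rat \<Rightarrow> rat \<times> rat" where
  "newton_step A R X = X - scalar (1/4) \<cdot> quartic A R X"

lemma quartic_newton_step:
  "quartic A R (newton_step A R X) = quartic A R X \<cdot> (scalar 1 - A \<cdot> X \<cdot> X \<cdot> X)
     + scalar (3/8) \<cdot> A \<cdot> X \<cdot> X \<cdot> quartic A R X \<cdot> quartic A R X
     + scalar (-1/16) \<cdot> A \<cdot> X \<cdot> quartic A R X \<cdot> quartic A R X \<cdot> quartic A R X
     + scalar (1/256) \<cdot> A \<cdot> quartic A R X \<cdot> quartic A R X \<cdot> quartic A R X \<cdot> quartic A R X"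
proof (rule embed_inj)
  define a r x where "a = embed A" "r = embed R" "x = embed X"
  have q: "embed (quartic A R X) = a * x ^ 4 + r"
    by (simp add: quartic_def embed_add embed_mul embed_qpow4 a_r_x_def)
  show "embed (quartic A R (newton_step A R X)) = embed (quartic A R X \<cdot> (scalar 1 - A \<cdot> X \<cdot> X \<cdot> X)
     + scalar (3/8) \<cdot> A \<cdot> X \<cdot> X \<cdot> quartic A R X \<cdot> quartic A R X
     + scalar (-1/16) \<cdot> A \<cdot> X \<cdot> quartic A R X \<cdot> quartic A R X \<cdot> quartic A R X
     + scalar (1/256) \<cdot> A \<cdot> quartic A R X \<cdot> quartic A R X \<cdot> quartic A R X \<cdot> quartic A R X)"
    unfolding embed_add embed_mul embed_diff embed_scalar q
    by (simp add: newton_step_def quartic_def embed_add embed_mul embed_diff embed_scalar embed_qpow4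
        a_r_x_def of_rat_divide of_rat_minus)
       (simp add: field_simps power4_eq_xxxx power3_eq_cube power2_eq_square; algebra)
qed

lemma small_newton_step:
  assumes A: "exact_val 0 A" and X: "small 3 (X - scalar 1)" and F: "small (7 + k) (quartic A R X)"
    and k: "k \<ge> 0"
  shows "small (3 + k) (newton_step A R X - X)" and "small (8 + k) (quartic A R (newton_step A R X))"
proof -
  define \<delta> where "\<delta> = quartic A R X"
  have \<delta>: "small (7 + k) \<delta>" using F \<delta>_def by simp
  have "newton_step A R X - X = - (scalar (1/4) \<cdot> \<delta>)" by (simp add: newton_step_def \<delta>_def)
  thus "small (3 + k) (newton_step A R X - X)"
    using small_mul[OF small_newton_coefficients(1) \<delta>] by simp
  have X_unit: "exact_val 0 X"
    using exact_val_add_small[OF exact_val_one small_mono[OF X]] by simp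
  have AX: "small 0 A" "small 0 X" using A X_unit exact_val_imp_small by auto
  have "exact_val 0 (A \<cdot> X \<cdot> X \<cdot> X)"
    using exact_val_mul[OF exact_val_mul[OF exact_val_mul[OF A X_unit] X_unit] X_unit] by simp
  hence "small 1 (scalar 1 - A \<cdot> X \<cdot> X \<cdot> X)"
    using exact_val_add_exact_val[OF exact_val_one, of "- (A \<cdot> X \<cdot> X \<cdot> X)"] by simp
  hence "small (7 + k + 1) (\<delta> \<cdot> (scalar 1 - A \<cdot> X \<cdot> X \<cdot> X))" by (intro small_mul \<delta>)
  hence T1: "small (8 + k) (\<delta> \<cdot> (scalar 1 - A \<cdot> X \<cdot> X \<cdot> X))" by (rule small_mono) simp
  have "small (-6 + 0 + 0 + 0 + (7 + k) + (7 + k)) (scalar (3/8) \<cdot> A \<cdot> X \<cdot> X \<cdot> \<delta> \<cdot> \<delta>)"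
    by (intro small_mul small_newton_coefficients AX \<delta>)
  hence T2: "small (8 + k) (scalar (3/8) \<cdot> A \<cdot> X \<cdot> X \<cdot> \<delta> \<cdot> \<delta>)" by (rule small_mono) (use k in linarith)
  have "small (-8 + 0 + 0 + (7 + k) + (7 + k) + (7 + k)) (scalar (-1/16) \<cdot> A \<cdot> X \<cdot> \<delta> \<cdot> \<delta> \<cdot> \<delta>)"
    by (intro small_mul small_newton_coefficients AX \<delta>)
  hence T3: "small (8 + k) (scalar (-1/16) \<cdot> A \<cdot> X \<cdot> \<delta> \<cdot> \<delta> \<cdot> \<delta>)" by (rule small_mono) (use k in linarith)
  have "small (-16 + 0 + (7 + k) + (7 + k) + (7 + k) + (7 + k)) (scalar (1/256) \<cdot> A \<cdot> \<delta> \<cdot> \<delta> \<cdot> \<delta> \<cdot> \<delta>)"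
    by (intro small_mul small_newton_coefficients AX \<delta>)
  hence T4: "small (8 + k) (scalar (1/256) \<cdot> A \<cdot> \<delta> \<cdot> \<delta> \<cdot> \<delta> \<cdot> \<delta>)" by (rule small_mono) (use k in linarith)
  show "small (8 + k) (quartic A R (newton_step A R X))"
    unfolding quartic_newton_step \<delta>_def[symmetric] by (intro small_add T1 T2 T3 T4)
qed

definition newton_iter :: "rat \<times> rat \<Rightarrow> rat \<times> rat \<Rightarrow> nat \<Rightarrow> rat \<times> rat" where
  "newton_iter A R k = (newton_step A R ^^ k) (scalar 1)"

lemma newton_iter_Suc: "newton_iter A R (Suc k) = newton_step A R (newton_iter A R k)"
  by (simp add: newton_iter_def)

lemma newton_iter_bounds:
  assumes A: "exact_val 0 A" and F: "small 7 (quartic A R (scalar 1))"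
  shows "small 3 (newton_iter A R k - scalar 1) \<and> small (7 + int k) (quartic A R (newton_iter A R k))"
proof (induction k)
  case 0
  show ?case using F by (simp add: newton_iter_def)
next
  case (Suc k)
  let ?X = "newton_iter A R k"
  have step: "small (3 + int k) (newton_step A R ?X - ?X)" "small (8 + int k) (quartic A R (newton_step A R ?X))"
    using small_newton_step[OF A, of ?X "int k" R] Suc.IH by auto
  have "newton_step A R ?X - scalar 1 = (?X - scalar 1) + (newton_step A R ?X - ?X)" by simp
  hence "small 3 (newton_step A R ?X - scalar 1)"
    using small_add[OF conjunct1[OF Suc.IH] small_mono[OF step(1)]] by (simp only:)
  thus ?case using step(2) by (simp add: newton_iter_Suc add.commute add.left_commute)
qed

lemma newton_iter_increment:
  assumes "exact_val 0 A" "small 7 (quartic A R (scalar 1))"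
  shows "small (3 + int k) (newton_iter A R (Suc k) - newton_iter A R k)"
  using small_newton_step(1)[OF assms(1)] newton_iter_bounds[OF assms] by (simp add: newton_iter_Suc)

section \<open>Approximate zeros modulo \<open>\<pi>\<^sup>7\<close>\<close>

definition pi_el :: "rat \<times> rat" where
  "pi_el = (0, 1)"

definition one_plus_pi :: "rat \<times> rat" where
  "one_plus_pi = (1, 1)"

lemma exact_val_pi: "exact_val 1 pi_el"
  using v2_d v2_uminus[of d] v2_of_int[of 1] v2_int_pow2_mult_odd[of 1 0]
  by (auto simp: exact_val_def pi_el_def small_iff v2_ge_def)

lemma exact_val_qpow4: "exact_val k x \<Longrightarrow> exact_val (4 * k) (qpow4 d x)"
  using exact_val_mul[of "k + k" "x \<cdot> x" "k + k"] exact_val_mul[of k x k x]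
  by (simp add: qpow4_def algebra_simps)

text \<open>Since \<open>(1 + \<pi>)\<^sup>4 = 1 + d\<^sup>2 + 6d + (4 + 4d) \<pi>\<close>, the fourth power of the unit \<open>1 + \<pi>\<close>
  differs from \<open>1\<close> exactly at level 5.\<close>

lemma exact_val_one_plus_pi_qpow4: "exact_val 5 (qpow4 d one_plus_pi - scalar 1)"
proof -
  have "qpow4 d one_plus_pi = qmul d (1 + d, 2) (1 + d, 2)"
    by (simp add: qpow4_def qmul_def one_plus_pi_def)
  hence eq: "qpow4 d one_plus_pi - scalar 1 = (d\<^sup>2 + 6 * d, 4 + 4 * d)"
    by (simp add: qmul_def power2_eq_square algebra_simps)
  have v: "v2 (of_int (2 ^ k * w)) = int k" if "\<not> 2 dvd w" for k w
    using v2_of_int_pow2_mult_odd that by blast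
  have "3 \<le> v2 (d\<^sup>2 + 6 * d) \<and> v2 (4 + 4 * d) = 2"
    using d_cases v[of 1 4] v[of 5 5] v[of "-1" 3] v[of 5 3] v[of 3 2] v[of 11 2] v[of "-1" 2] v[of "-9" 2]
    by auto
  moreover have "4 + 4 * d \<noteq> 0" using d_cases by auto
  ultimately show ?thesis unfolding eq by (auto simp: exact_val_def small_iff v2_ge_def)
qed

text \<open>The coefficient of \<open>\<pi>\<^sup>k\<close> in \<open>y\<close> is \<open>0\<close> or \<open>1\<close>; in the latter case adding any \<open>e\<close> of
  valuation \<open>k\<close> removes it.\<close>

lemma small_Suc_add_optional:
  assumes "small k y" "exact_val k e"
  obtains f where "small (k + 1) (y + (if f then e else 0))"
proof (cases "small (k + 1) y")
  case True thus thesis using that[of False] by simp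
next
  case False
  hence "exact_val k y" using assms by (simp add: exact_val_def)
  thus thesis using that[of True] exact_val_add_exact_val[OF _ assms(2)] by simp
qed

lemma approx_zero_level_3021_pair:
  fixes A :: "nat \<Rightarrow> rat \<times> rat"
  assumes A: "\<forall>m<6. exact_val (level_3021 m) (A m)"
    and ijk: "{i, j, k} = {0, 1, 2}" "distinct [i, j, k]" and pair: "small 2 (A i + A j)"
  shows "\<exists>c. c i = scalar 1 \<and> (\<forall>m. small 0 (c m)) \<and> small 7 (\<Sum>m<6. A m \<cdot> qpow4 d (c m))"
proof -
  have "{i, j, k} \<subseteq> {..<3}" unfolding ijk(1) by auto
  hence "i < 3" "j < 3" "k < 3" by auto
  hence lv: "exact_val 0 (A i)" "exact_val 0 (A j)" "exact_val 0 (A k)"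
    "exact_val 2 (A 3)" "exact_val 2 (A 4)" "exact_val 3 (A 5)"
    using A[rule_format, of i] A[rule_format, of j] A[rule_format, of k] A[rule_format, of 3]
      A[rule_format, of 4] A[rule_format, of 5] by (simp_all add: level_3021_def)
  have pi4: "exact_val 4 (A k \<cdot> qpow4 d pi_el)" "exact_val 6 (A 4 \<cdot> qpow4 d pi_el)"
    using exact_val_mul[OF lv(3) exact_val_qpow4[OF exact_val_pi]]
      exact_val_mul[OF lv(5) exact_val_qpow4[OF exact_val_pi]] by simp_all
  have pi5: "exact_val 5 (A j \<cdot> (qpow4 d one_plus_pi - scalar 1))"
    using exact_val_mul[OF lv(2) exact_val_one_plus_pi_qpow4] by simp
  obtain f0 where y0: "small 3 (A i + A j + (if f0 then A 3 else 0))"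
    using small_Suc_add_optional[OF pair lv(4)] by auto
  obtain f1 where y1: "small 4 (A i + A j + (if f0 then A 3 else 0) + (if f1 then A 5 else 0))"
    using small_Suc_add_optional[OF y0 lv(6)] by auto
  obtain f2 where y2: "small 5 (A i + A j + (if f0 then A 3 else 0) + (if f1 then A 5 else 0)
      + (if f2 then A k \<cdot> qpow4 d pi_el else 0))"
    using small_Suc_add_optional[OF y1 pi4(1)] by auto
  obtain f3 where y3: "small 6 (A i + A j + (if f0 then A 3 else 0) + (if f1 then A 5 else 0)
      + (if f2 then A k \<cdot> qpow4 d pi_el else 0) + (if f3 then A j \<cdot> (qpow4 d one_plus_pi - scalar 1) else 0))"
    using small_Suc_add_optional[OF y2 pi5] by auto
  obtain f4 where y4: "small 7 (A i + A j + (if f0 then A 3 else 0) + (if f1 then A 5 else 0)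
      + (if f2 then A k \<cdot> qpow4 d pi_el else 0) + (if f3 then A j \<cdot> (qpow4 d one_plus_pi - scalar 1) else 0)
      + (if f4 then A 4 \<cdot> qpow4 d pi_el else 0))"
    using small_Suc_add_optional[OF y3 pi4(2)] by auto
  define c where "c m = (if m = i then scalar 1 else if m = j then (if f3 then one_plus_pi else scalar 1)
    else if m = k then (if f2 then pi_el else 0) else if m = 3 then (if f0 then scalar 1 else 0)
    else if m = 4 then (if f4 then pi_el else 0) else if m = 5 then (if f1 then scalar 1 else 0) else 0)" for m
  have terms: "A i \<cdot> qpow4 d (c i) = A i"
    "A j \<cdot> qpow4 d (c j) = A j + (if f3 then A j \<cdot> (qpow4 d one_plus_pi - scalar 1) else 0)"
    "A k \<cdot> qpow4 d (c k) = (if f2 then A k \<cdot> qpow4 d pi_el else 0)"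
    "A 3 \<cdot> qpow4 d (c 3) = (if f0 then A 3 else 0)" "A 4 \<cdot> qpow4 d (c 4) = (if f4 then A 4 \<cdot> qpow4 d pi_el else 0)"
    "A 5 \<cdot> qpow4 d (c 5) = (if f1 then A 5 else 0)"
    using ijk \<open>i < 3\<close> \<open>j < 3\<close> \<open>k < 3\<close>
    by (simp_all add: c_def qmul_right_diff_distrib)
  have "(\<Sum>m<6. A m \<cdot> qpow4 d (c m)) = A 3 \<cdot> qpow4 d (c 3) + A 4 \<cdot> qpow4 d (c 4) + A 5 \<cdot> qpow4 d (c 5)
      + (A i \<cdot> qpow4 d (c i) + A j \<cdot> qpow4 d (c j) + A k \<cdot> qpow4 d (c k))"
    by (rule sum_lessThan_6_permute[OF ijk])
  also have "\<dots> = A i + A j + (if f0 then A 3 else 0) + (if f1 then A 5 else 0)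
      + (if f2 then A k \<cdot> qpow4 d pi_el else 0) + (if f3 then A j \<cdot> (qpow4 d one_plus_pi - scalar 1) else 0)
      + (if f4 then A 4 \<cdot> qpow4 d pi_el else 0)"
    unfolding terms by (simp add: ac_simps)
  finally have "small 7 (\<Sum>m<6. A m \<cdot> qpow4 d (c m))" using y4 by (simp only:)
  moreover have "small 0 (scalar 1)" "small 0 pi_el" "small 0 one_plus_pi"
    using exact_val_imp_small[OF exact_val_one] small_mono[OF exact_val_imp_small[OF exact_val_pi]]
      v2_of_int[of 1] v2_int_pow2_mult_odd[of 1 0] by (auto simp: one_plus_pi_def pi_el_def small_iff v2_ge_def)
  hence "\<forall>m. small 0 (c m)" by (simp add: c_def)
  moreover have "c i = scalar 1" by (simp add: c_def)
  ultimately show ?thesis by blast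
qed

lemma approx_zero_level_3021:
  fixes A :: "nat \<Rightarrow> rat \<times> rat"
  assumes A: "\<forall>m<6. exact_val (level_3021 m) (A m)"
  shows "\<exists>i<3. \<exists>c. c i = scalar 1 \<and> (\<forall>m. small 0 (c m)) \<and> small 7 (\<Sum>m<6. A m \<cdot> qpow4 d (c m))"
proof -
  have units: "exact_val 0 (A 0)" "exact_val 0 (A 1)" "exact_val 0 (A 2)"
    using A[rule_format, of 0] A[rule_format, of 1] A[rule_format, of 2] by (simp_all add: level_3021_def)
  have "small 2 (A 0 + A 1) \<or> small 2 (A 0 + A 2) \<or> small 2 (A 1 + A 2)"
  proof (rule ccontr)
    assume none: "\<not> ?thesis"
    have "exact_val 1 (A 0 + A 1)" "exact_val 1 (A 0 + A 2)"
      using exact_val_add_exact_val[OF units(1,2)] exact_val_add_exact_val[OF units(1,3)] none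
      by (simp_all add: exact_val_def)
    hence "small 2 ((A 0 + A 1) + (A 0 + A 2))" using exact_val_add_exact_val by fastforce
    moreover have "small 2 (A 0 + A 0)"
    proof -
      have "small 2 (scalar 2)" using v2_of_int_pow2_mult_odd[of 1 1] by (simp add: small_scalar_iff v2_ge_def)
      moreover have "A 0 + A 0 = scalar 2 \<cdot> A 0" by (simp add: qmul_def prod_eq_iff)
      ultimately show ?thesis using small_mul[OF _ exact_val_imp_small[OF units(1)], of 2] by simp
    qed
    ultimately have "small 2 (((A 0 + A 1) + (A 0 + A 2)) - (A 0 + A 0))" by (rule small_diff)
    thus False using none by (simp add: algebra_simps)
  qed
  then consider "small 2 (A 0 + A 1)" | "small 2 (A 0 + A 2)" | "small 2 (A 1 + A 2)" by blast
  thus ?thesis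
  proof cases
    case 1
    have "\<exists>c. c 0 = scalar 1 \<and> (\<forall>m. small 0 (c m)) \<and> small 7 (\<Sum>m<6. A m \<cdot> qpow4 d (c m))"
      by (rule approx_zero_level_3021_pair[OF A, of 0 1 2]) (use 1 in auto)
    thus ?thesis by force
  next
    case 2
    have "\<exists>c. c 0 = scalar 1 \<and> (\<forall>m. small 0 (c m)) \<and> small 7 (\<Sum>m<6. A m \<cdot> qpow4 d (c m))"
      by (rule approx_zero_level_3021_pair[OF A, of 0 2 1]) (use 2 in auto)
    thus ?thesis by force
  next
    case 3
    have "\<exists>c. c 1 = scalar 1 \<and> (\<forall>m. small 0 (c m)) \<and> small 7 (\<Sum>m<6. A m \<cdot> qpow4 d (c m))"
      by (rule approx_zero_level_3021_pair[OF A, of 1 2 0]) (use 3 in auto)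
    thus ?thesis by force
  qed
qed

section \<open>Cauchy sequences\<close>

lemma K_cauchy_iff: "K_cauchy d s \<longleftrightarrow> (\<forall>N. \<exists>M. \<forall>m\<ge>M. \<forall>n\<ge>M. small N (s m - s n))"
proof -
  have "qsub x y = x - y" for x y :: "rat \<times> rat" by (simp add: qsub_def prod_eq_iff)
  thus ?thesis by (simp add: K_cauchy_def)
qed

lemma K_cauchy_const: "K_cauchy d (\<lambda>n. c)"
  by (simp add: K_cauchy_iff)

lemma K_cauchy_add:
  assumes "K_cauchy d s" "K_cauchy d t"
  shows "K_cauchy d (\<lambda>n. s n + t n)"
  unfolding K_cauchy_iff
proof
  fix N
  obtain M1 where M1: "\<forall>m\<ge>M1. \<forall>n\<ge>M1. small N (s m - s n)" using assms(1) K_cauchy_iff by blast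
  obtain M2 where M2: "\<forall>m\<ge>M2. \<forall>n\<ge>M2. small N (t m - t n)" using assms(2) K_cauchy_iff by blast
  have "small N ((s m + t m) - (s n + t n))" if "m \<ge> max M1 M2" "n \<ge> max M1 M2" for m n
  proof -
    have "small N ((s m - s n) + (t m - t n))" using M1 M2 that small_add by simp
    thus ?thesis by (simp add: algebra_simps)
  qed
  thus "\<exists>M. \<forall>m\<ge>M. \<forall>n\<ge>M. small N ((s m + t m) - (s n + t n))" by blast
qed

lemma K_cauchy_uminus: "K_cauchy d s \<Longrightarrow> K_cauchy d (\<lambda>n. - s n)"
proof -
  have "small N (- s m - - s n) = small N (s m - s n)" for N m n
    using small_uminus[of N "s m - s n"] by (simp add: algebra_simps)
  thus "K_cauchy d s \<Longrightarrow> K_cauchy d (\<lambda>n. - s n)" by (simp add: K_cauchy_iff)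
qed

lemma K_cauchy_diff: "K_cauchy d s \<Longrightarrow> K_cauchy d t \<Longrightarrow> K_cauchy d (\<lambda>n. s n - t n)"
  using K_cauchy_add[of s "\<lambda>n. - t n"] K_cauchy_uminus[of t] by simp

lemma K_cauchy_sum:
  "finite S \<Longrightarrow> (\<And>m. m \<in> S \<Longrightarrow> K_cauchy d (f m)) \<Longrightarrow> K_cauchy d (\<lambda>n. \<Sum>m\<in>S. f m n)"
  by (induction S rule: finite_induct) (simp_all add: K_cauchy_const[of 0] K_cauchy_add)

lemma K_cauchy_eventually_bounded:
  assumes "K_cauchy d s"
  obtains B M where "\<forall>n\<ge>M. small B (s n)"
proof -
  obtain M where M: "\<forall>m\<ge>M. \<forall>n\<ge>M. small 0 (s m - s n)" using assms K_cauchy_iff by blast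
  obtain B where B: "small B (s M)" using small_exists by blast
  have "small (min B 0) (s n)" if "n \<ge> M" for n
  proof -
    have "small (min B 0) (s M + (s n - s M))"
      using small_add[OF small_mono[OF B] small_mono[of 0 "s n - s M"]] M that by simp
    thus ?thesis by simp
  qed
  thus thesis using that by blast
qed

lemma K_cauchy_mul:
  assumes s: "K_cauchy d s" and t: "K_cauchy d t"
  shows "K_cauchy d (\<lambda>n. s n \<cdot> t n)"
  unfolding K_cauchy_iff
proof
  fix N
  obtain Bs Ms where Bs: "\<forall>n\<ge>Ms. small Bs (s n)" using K_cauchy_eventually_bounded[OF s] by blast
  obtain Bt Mt where Bt: "\<forall>n\<ge>Mt. small Bt (t n)" using K_cauchy_eventually_bounded[OF t] by blast
  obtain M1 where M1: "\<forall>m\<ge>M1. \<forall>n\<ge>M1. small (N - Bt) (s m - s n)" using s K_cauchy_iff by blast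
  obtain M2 where M2: "\<forall>m\<ge>M2. \<forall>n\<ge>M2. small (N - Bs) (t m - t n)" using t K_cauchy_iff by blast
  define M where "M = max (max Ms Mt) (max M1 M2)"
  have "small N (s m \<cdot> t m - s n \<cdot> t n)" if mn: "m \<ge> M" "n \<ge> M" for m n
  proof -
    have eq: "s m \<cdot> t m - s n \<cdot> t n = (t m - t n) \<cdot> s m + (s m - s n) \<cdot> t n"
      by (rule embed_inj) (simp add: embed_mul embed_diff embed_add algebra_simps)
    have "small (N - Bs + Bs) ((t m - t n) \<cdot> s m)" using M2 Bs mn M_def by (intro small_mul) auto
    moreover have "small (N - Bt + Bt) ((s m - s n) \<cdot> t n)" using M1 Bt mn M_def by (intro small_mul) auto
    ultimately show ?thesis unfolding eq using small_add by simp
  qed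
  thus "\<exists>M. \<forall>m\<ge>M. \<forall>n\<ge>M. small N (s m \<cdot> t m - s n \<cdot> t n)" by blast
qed

lemma K_cauchy_qpow4: "K_cauchy d s \<Longrightarrow> K_cauchy d (\<lambda>n. qpow4 d (s n))"
  unfolding qpow4_def by (intro K_cauchy_mul)

lemma K_null_mul_left:
  assumes "K_null d s"
  shows "K_null d (\<lambda>n. c \<cdot> s n)"
  unfolding K_null_def
proof
  fix N
  obtain B where B: "small B c" using small_exists by blast
  obtain M where "\<forall>n\<ge>M. small (N - B) (s n)" using assms unfolding K_null_def by blast
  hence "\<forall>n\<ge>M. small (B + (N - B)) (c \<cdot> s n)" using small_mul[OF B] by blast
  thus "\<exists>M. \<forall>n\<ge>M. small N (c \<cdot> s n)" by auto
qed

lemma eventually_exact_val_K_val: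
  assumes "K_cauchy d s" "\<not> K_null d s"
  shows "\<exists>M. \<forall>n\<ge>M. exact_val (K_val d s) (s n)"
proof -
  obtain N where N: "\<forall>M. \<exists>n\<ge>M. \<not> small N (s n)" using assms(2) unfolding K_null_def by blast
  obtain M0 where M0: "\<forall>m\<ge>M0. \<forall>n\<ge>M0. small N (s m - s n)" using assms(1) K_cauchy_iff by blast
  obtain n1 where n1: "n1 \<ge> M0" "\<not> small N (s n1)" using N by blast
  define k where "k = vpi d (s n1)"
  have ek: "exact_val k (s n1)" using n1 by (simp add: exact_val_iff k_def pi_small_def zero_prod_def)
  have kN: "k + 1 \<le> N" using n1 by (auto simp: pi_small_def k_def zero_prod_def)
  have all: "\<forall>n\<ge>M0. exact_val k (s n)"
  proof (intro allI impI)
    fix n assume "n \<ge> M0"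
    hence "small (k + 1) (s n - s n1)" using M0 n1 small_mono kN by blast
    hence "exact_val k (s n1 + (s n - s n1))" by (rule exact_val_add_small[OF ek])
    thus "exact_val k (s n)" by simp
  qed
  have "K_val d s = k"
    unfolding K_val_def
  proof (rule the_equality)
    show "\<exists>M. \<forall>n\<ge>M. vpi d (s n) = k" using all by (auto simp: exact_val_iff)
  next
    fix k' assume "\<exists>M. \<forall>n\<ge>M. vpi d (s n) = k'"
    then obtain M' where "\<forall>n\<ge>M'. vpi d (s n) = k'" by blast
    thus "k' = k" using all[rule_format, of "max M0 M'"] by (auto simp: exact_val_iff)
  qed
  thus ?thesis using all by auto
qed

lemma K_cauchy_diagonal:
  assumes cauchy: "\<And>k. K_cauchy d (Y k)"
    and steps: "\<And>n k. n \<ge> n0 \<Longrightarrow> small (int k) (Y (Suc k) n - Y k n)"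
  shows "K_cauchy d (\<lambda>n. Y n n)"
  unfolding K_cauchy_iff
proof
  fix N
  define k0 where "k0 = nat N"
  obtain M where M: "\<forall>p\<ge>M. \<forall>q\<ge>M. small N (Y k0 p - Y k0 q)" using cauchy K_cauchy_iff by blast
  have tail: "small N (Y n n - Y k0 n)" if n: "n \<ge> max n0 k0" for n
  proof -
    have "Y n n - Y k0 n = (\<Sum>k = k0..<n. Y (Suc k) n - Y k n)"
      using sum_Suc_diff'[of k0 n "\<lambda>k. Y k n"] n by simp
    also have "small N \<dots>"
    proof (rule small_sum)
      fix k assume "k \<in> {k0..<n}"
      hence "N \<le> int k" by (auto simp: k0_def)
      moreover have "small (int k) (Y (Suc k) n - Y k n)" using steps n by simp
      ultimately show "small N (Y (Suc k) n - Y k n)" using small_mono by blast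
    qed
    finally show ?thesis .
  qed
  have "small N (Y p p - Y q q)" if pq: "p \<ge> max M (max n0 k0)" "q \<ge> max M (max n0 k0)" for p q
  proof -
    have eq: "Y p p - Y q q = ((Y p p - Y k0 p) + (Y k0 p - Y k0 q)) - (Y q q - Y k0 q)" by simp
    show ?thesis unfolding eq using tail[of p] tail[of q] M pq by (intro small_diff[OF small_add]) auto
  qed
  thus "\<exists>M. \<forall>p\<ge>M. \<forall>q\<ge>M. small N (Y p p - Y q q)" by blast
qed

section \<open>Zeros in \<open>K\<close>\<close>

text \<open>Hensel's lemma in \<open>K\<close>: run the iteration on the \<open>n\<close>-th terms and take the diagonal.\<close>

lemma quartic_root_in_K:
  assumes A: "K_cauchy d A" and R: "K_cauchy d R"
    and start: "\<And>n. n \<ge> n0 \<Longrightarrow> exact_val 0 (A n) \<and> small 7 (quartic (A n) (R n) (scalar 1))"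
  shows "\<exists>X. K_cauchy d X \<and> \<not> K_null d X \<and> K_null d (\<lambda>n. quartic (A n) (R n) (X n))"
proof -
  define Y where "Y k n = newton_iter (A n) (R n) k" for k n
  have bounds: "small 3 (Y k n - scalar 1)" "small (7 + int k) (quartic (A n) (R n) (Y k n))"
    and step: "small (int k) (Y (Suc k) n - Y k n)" if "n \<ge> n0" for n k
    using newton_iter_bounds[of "A n" "R n" k] newton_iter_increment[of "A n" "R n" k] start[OF that]
      small_mono unfolding Y_def by auto
  have "K_cauchy d (Y k)" for k
  proof (induction k)
    case 0 show ?case by (simp add: Y_def newton_iter_def K_cauchy_const)
  next
    case (Suc k)
    have "Y (Suc k) = (\<lambda>n. Y k n - scalar (1/4) \<cdot> (A n \<cdot> qpow4 d (Y k n) + R n))"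
      unfolding Y_def by (simp add: newton_iter_Suc newton_step_def quartic_def)
    thus ?case using Suc A R by (simp add: K_cauchy_diff K_cauchy_mul K_cauchy_const K_cauchy_add K_cauchy_qpow4)
  qed
  hence cauchy: "K_cauchy d (\<lambda>n. Y n n)" using step by (rule K_cauchy_diagonal)
  have "\<not> K_null d (\<lambda>n. Y n n)"
  proof
    assume "K_null d (\<lambda>n. Y n n)"
    then obtain M where M: "\<forall>n\<ge>M. small 1 (Y n n)" unfolding K_null_def by blast
    define n where "n = max M n0"
    have "small (0 + 1) (Y n n - scalar 1)" using bounds(1)[of n n] small_mono n_def by simp
    hence "exact_val 0 (scalar 1 + (Y n n - scalar 1))" by (rule exact_val_add_small[OF exact_val_one])
    thus False using M n_def by (simp add: exact_val_def)
  qed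
  moreover have "K_null d (\<lambda>n. quartic (A n) (R n) (Y n n))"
    unfolding K_null_def
  proof
    fix N
    have "small N (quartic (A n) (R n) (Y n n))" if "n \<ge> max n0 (nat N)" for n
    proof -
      have "small (7 + int n) (quartic (A n) (R n) (Y n n))" using bounds(2)[of n n] that by simp
      thus ?thesis by (rule small_mono) (use that in linarith)
    qed
    thus "\<exists>M. \<forall>n\<ge>M. small N (quartic (A n) (R n) (Y n n))" by blast
  qed
  ultimately show ?thesis using cauchy by blast
qed

lemma quartic_eq_sum:
  assumes "finite S" "i \<in> S"
  shows "quartic (A i) (\<Sum>m\<in>S - {i}. A m \<cdot> qpow4 d (c m)) Z = (\<Sum>m\<in>S. A m \<cdot> qpow4 d (if m = i then Z else c m))"
proof -
  have "(\<Sum>m\<in>S. A m \<cdot> qpow4 d (if m = i then Z else c m))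
      = A i \<cdot> qpow4 d Z + (\<Sum>m\<in>S - {i}. A m \<cdot> qpow4 d (if m = i then Z else c m))"
    using assms by (subst sum.remove[of S i]) auto
  also have "(\<Sum>m\<in>S - {i}. A m \<cdot> qpow4 d (if m = i then Z else c m)) = (\<Sum>m\<in>S - {i}. A m \<cdot> qpow4 d (c m))"
    by (rule sum.cong) auto
  finally show ?thesis by (simp add: quartic_def)
qed

lemma small_sum_qpow4_perturb:
  assumes "\<And>m. m \<in> S \<Longrightarrow> small N (B m - A m)" "\<And>m. small 0 (c m)"
    and "small N (\<Sum>m\<in>S. A m \<cdot> qpow4 d (c m))"
  shows "small N (\<Sum>m\<in>S. B m \<cdot> qpow4 d (c m))"
proof -
  have eq: "(\<Sum>m\<in>S. B m \<cdot> qpow4 d (c m))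
      = (\<Sum>m\<in>S. A m \<cdot> qpow4 d (c m)) + (\<Sum>m\<in>S. (B m - A m) \<cdot> qpow4 d (c m))"
    by (simp add: qmul_left_diff_distrib sum_subtractf)
  have "small N (\<Sum>m\<in>S. (B m - A m) \<cdot> qpow4 d (c m))"
  proof (rule small_sum)
    fix m assume "m \<in> S"
    have "small (0 + 0 + (0 + 0)) (qpow4 d (c m))" unfolding qpow4_def by (intro small_mul assms(2))
    thus "small N ((B m - A m) \<cdot> qpow4 d (c m))" using small_mul[OF assms(1)[OF \<open>m \<in> S\<close>]] by fastforce
  qed
  thus ?thesis unfolding eq by (rule small_add[OF assms(3)])
qed

lemma zero_level_3021_in_K:
  fixes A :: "nat \<Rightarrow> nat \<Rightarrow> rat \<times> rat"
  assumes cauchy: "\<forall>m<6. K_cauchy d (A m)"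
    and levels: "\<exists>M. \<forall>n\<ge>M. \<forall>m<6. exact_val (level_3021 m) (A m n)"
  shows "\<exists>Y. (\<forall>m<6. K_cauchy d (Y m)) \<and> (\<exists>m<6. \<not> K_null d (Y m)) \<and>
             K_null d (\<lambda>n. \<Sum>m<6. A m n \<cdot> qpow4 d (Y m n))"
proof -
  have "\<exists>M. \<forall>n\<ge>M. \<forall>m<6. \<forall>p\<ge>n. \<forall>q\<ge>n. small 7 (A m p - A m q)"
  proof (rule eventually_forall_lessThan)
    fix m :: nat assume "m < 6"
    then obtain M where "\<forall>p\<ge>M. \<forall>q\<ge>M. small 7 (A m p - A m q)" using cauchy K_cauchy_iff by blast
    thus "\<exists>M. \<forall>n\<ge>M. \<forall>p\<ge>n. \<forall>q\<ge>n. small 7 (A m p - A m q)" by (meson order.trans)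
  qed
  then obtain M2 where M2: "\<forall>m<6. \<forall>p\<ge>M2. \<forall>q\<ge>M2. small 7 (A m p - A m q)" by blast
  obtain M1 where M1: "\<forall>n\<ge>M1. \<forall>m<6. exact_val (level_3021 m) (A m n)" using levels by blast
  define n0 where "n0 = max M1 M2"
  obtain i c where i: "i < 3" "c i = scalar 1" "\<forall>m. small 0 (c m)"
    and approx: "small 7 (\<Sum>m<6. A m n0 \<cdot> qpow4 d (c m))"
    using approx_zero_level_3021[of "\<lambda>m. A m n0"] M1 n0_def by auto
  have approx_later: "small 7 (\<Sum>m<6. A m n \<cdot> qpow4 d (c m))" if "n \<ge> n0" for n
    by (rule small_sum_qpow4_perturb[OF _ i(3)[rule_format] approx]) (use M2 that n0_def in auto)
  define R where "R n = (\<Sum>m\<in>{..<6} - {i}. A m n \<cdot> qpow4 d (c m))" for n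
  have quartic_sum: "quartic (A i n) (R n) Z = (\<Sum>m<6. A m n \<cdot> qpow4 d (if m = i then Z else c m))" for n Z
    unfolding R_def using i(1) by (intro quartic_eq_sum) auto
  have "exact_val 0 (A i n) \<and> small 7 (quartic (A i n) (R n) (scalar 1))" if "n \<ge> n0" for n
  proof -
    have "(\<Sum>m<6. A m n \<cdot> qpow4 d (if m = i then scalar 1 else c m)) = (\<Sum>m<6. A m n \<cdot> qpow4 d (c m))"
      using i(2) by (intro sum.cong) auto
    moreover have "exact_val (level_3021 i) (A i n)" using M1 that i(1) n0_def by simp
    ultimately show ?thesis using quartic_sum approx_later[OF that] i(1) by (simp add: level_3021_def)
  qed
  moreover have "K_cauchy d R"
    unfolding R_def using cauchy by (intro K_cauchy_sum K_cauchy_mul K_cauchy_const) auto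
  ultimately obtain X where X: "K_cauchy d X" "\<not> K_null d X" "K_null d (\<lambda>n. quartic (A i n) (R n) (X n))"
    using quartic_root_in_K[of "A i" R n0] cauchy i(1) by auto
  define Y where "Y m = (if m = i then X else (\<lambda>n. c m))" for m
  have "(\<lambda>n. \<Sum>m<6. A m n \<cdot> qpow4 d (Y m n)) = (\<lambda>n. quartic (A i n) (R n) (X n))"
    unfolding quartic_sum Y_def by (intro ext sum.cong) auto
  hence "K_null d (\<lambda>n. \<Sum>m<6. A m n \<cdot> qpow4 d (Y m n))" using X(3) by simp
  moreover have "\<forall>m<6. K_cauchy d (Y m)" using X(1) by (simp add: Y_def K_cauchy_const)
  moreover have "\<exists>m<6. \<not> K_null d (Y m)" using X(2) i(1) by (intro exI[of _ i]) (simp add: Y_def)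
  ultimately show ?thesis by blast
qed

definition pi_inv_el :: "rat \<times> rat" where
  "pi_inv_el = (0, 1 / d)"

definition qpower :: "rat \<times> rat \<Rightarrow> nat \<Rightarrow> rat \<times> rat" where
  "qpower x n = ((\<lambda>y. x \<cdot> y) ^^ n) (scalar 1)"

definition pi_pow :: "int \<Rightarrow> rat \<times> rat" where
  "pi_pow k = (if k \<ge> 0 then qpower pi_el (nat k) else qpower pi_inv_el (nat (- k)))"

lemma embed_qpower: "embed (qpower x n) = embed x ^ n"
  by (induction n) (simp_all add: qpower_def embed_mul embed_scalar)

lemma embed_pi_pow: "embed (pi_pow k) = sqrt_d powi k"
proof -
  have "embed pi_inv_el = of_rat (1 / d) * sqrt_d" by (simp add: embed_def pi_inv_el_def)
  also have "\<dots> = inverse sqrt_d"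
    using sqrt_d_square sqrt_d_nonzero d_nonzero by (simp add: of_rat_divide power2_eq_square field_simps)
  finally have "embed pi_inv_el = inverse sqrt_d" .
  moreover have "embed pi_el = sqrt_d" by (simp add: embed_def pi_el_def)
  ultimately show ?thesis by (simp add: pi_pow_def embed_qpower power_int_def power_inverse)
qed

lemma exact_val_qpower: "exact_val k x \<Longrightarrow> exact_val (int n * k) (qpower x n)"
proof (induction n)
  case 0 thus ?case using exact_val_one by (simp add: qpower_def)
next
  case (Suc n)
  have "exact_val (k + int n * k) (x \<cdot> qpower x n)" using exact_val_mul[OF Suc.prems Suc.IH[OF Suc.prems]] .
  thus ?case by (simp add: qpower_def algebra_simps)
qed

lemma exact_val_pi_pow: "exact_val k (pi_pow k)"
proof -
  have "v2 (1 / d) = -1" using v2_inverse[of d] v2_d by (simp add: divide_inverse)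
  hence "exact_val (-1) pi_inv_el" using d_nonzero by (auto simp: exact_val_def pi_inv_el_def small_iff v2_ge_def)
  thus ?thesis using exact_val_qpower[OF exact_val_pi, of "nat k"] exact_val_qpower[of "-1" pi_inv_el "nat (- k)"]
    by (cases "0 \<le> k") (auto simp: pi_pow_def)
qed

lemma pi_pow_cancel: "pi_pow q \<cdot> (pi_pow (- q) \<cdot> y) = y"
  by (rule embed_inj) (simp add: embed_mul embed_pi_pow power_int_minus sqrt_d_nonzero)

text \<open>Replacing \<open>x\<close> by \<open>\<pi>\<^sup>-\<^sup>q x\<close> lowers the level of a term by \<open>4q\<close>; this is how all levels are
  brought into \<open>{j, \<dots>, j + 3}\<close> and then, after dividing the form by \<open>\<pi>\<^sup>j\<close>, into \<open>{0, \<dots>, 3}\<close>.\<close>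

lemma rescale_quartic_term:
  "A \<cdot> qpow4 d (pi_pow (- q) \<cdot> y) = pi_pow j \<cdot> ((A \<cdot> pi_pow (- (4 * q + j))) \<cdot> qpow4 d y)"
proof (rule embed_inj)
  have "(sqrt_d powi (- q)) ^ 4 = sqrt_d powi (- (4 * q))"
    using power_int_mult[of sqrt_d q 4] by (simp add: power_int_minus power_inverse mult.commute)
  moreover have "sqrt_d powi j * sqrt_d powi (- (4 * q + j)) = sqrt_d powi (- (4 * q))"
    using sqrt_d_nonzero by (simp add: power_int_add[symmetric])
  ultimately show "embed (A \<cdot> qpow4 d (pi_pow (- q) \<cdot> y)) = embed (pi_pow j \<cdot> ((A \<cdot> pi_pow (- (4 * q + j))) \<cdot> qpow4 d y))"
    unfolding embed_mul embed_qpow4 embed_pi_pow by (simp add: power_mult_distrib algebra_simps)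
qed

lemma eventually_exact_val_rescaled:
  assumes "K_cauchy d s" "\<not> K_null d s"
  shows "\<exists>M. \<forall>n\<ge>M. exact_val (K_val d s - k) (s n \<cdot> pi_pow (- k))"
proof -
  obtain M where "\<forall>n\<ge>M. exact_val (K_val d s) (s n)" using eventually_exact_val_K_val assms by blast
  hence "\<forall>n\<ge>M. exact_val (K_val d s + - k) (s n \<cdot> pi_pow (- k))" using exact_val_mul exact_val_pi_pow by blast
  thus ?thesis by auto
qed

lemma K_null_pi_pow_mul_iff: "K_null d (\<lambda>n. pi_pow k \<cdot> s n) \<longleftrightarrow> K_null d s"
proof
  assume "K_null d (\<lambda>n. pi_pow k \<cdot> s n)"
  hence "K_null d (\<lambda>n. pi_pow (- k) \<cdot> (pi_pow k \<cdot> s n))" by (rule K_null_mul_left)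
  thus "K_null d s" using pi_pow_cancel[of "- k"] by simp
qed (rule K_null_mul_left)

lemma zero_of_rescaled_subform:
  assumes inj: "inj_on idx {..<k}" and sub: "idx ` {..<k} \<subseteq> {..<r}"
    and Y: "\<forall>m<k. K_cauchy d (Y m)" "\<exists>m<k. \<not> K_null d (Y m)"
      "K_null d (\<lambda>n. \<Sum>m<k. (a (idx m) n \<cdot> pi_pow (- (4 * q m + j))) \<cdot> qpow4 d (Y m n))"
  shows "\<exists>x. (\<forall>i<r. K_cauchy d (x i)) \<and> (\<exists>i<r. \<not> K_null d (x i)) \<and> K_null d (diag4 d r a x)"
proof -
  define x where "x i n = (if i \<in> idx ` {..<k} then pi_pow (- q (inv_into {..<k} idx i)) \<cdot> Y (inv_into {..<k} idx i) n
    else 0)" for i n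
  have x_idx: "x (idx m) = (\<lambda>n. pi_pow (- q m) \<cdot> Y m n)" if "m < k" for m
    using that inj by (auto simp: x_def inv_into_f_f)
  have x_other: "x i = (\<lambda>n. 0)" if "i \<notin> idx ` {..<k}" for i
    using that by (auto simp: x_def)
  have "diag4 d r a x n = (\<Sum>m<k. a (idx m) n \<cdot> qpow4 d (pi_pow (- q m) \<cdot> Y m n))" for n
    using diag4_extend_by_zero[OF inj sub, where Y = "\<lambda>m n. pi_pow (- q m) \<cdot> Y m n"] x_idx x_other
    by blast
  hence "diag4 d r a x = (\<lambda>n. pi_pow j \<cdot> (\<Sum>m<k. (a (idx m) n \<cdot> pi_pow (- (4 * q m + j))) \<cdot> qpow4 d (Y m n)))"
    by (intro ext) (simp add: qmul_sum_distrib_left rescale_quartic_term[where j = j])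
  hence "K_null d (diag4 d r a x)" using K_null_mul_left[OF Y(3)] by simp
  moreover have "K_cauchy d (x i)" for i
  proof (cases "i \<in> idx ` {..<k}")
    case True
    then obtain m where "m < k" "i = idx m" by auto
    thus ?thesis using Y(1) x_idx by (auto intro!: K_cauchy_mul K_cauchy_const)
  next
    case False
    thus ?thesis using x_other K_cauchy_const by simp
  qed
  moreover obtain m where m: "m < k" "\<not> K_null d (Y m)" using Y(2) by blast
  hence "\<not> K_null d (x (idx m))" using x_idx K_null_pi_pow_mul_iff by simp
  ultimately show ?thesis using sub m(1) by blast
qed

lemma zero_of_subform_3021:
  assumes coeffs: "\<forall>i<r. K_cauchy d (a i) \<and> \<not> K_null d (a i)"
    and inj: "inj_on idx {..<6}" and sub: "idx ` {..<6} \<subseteq> {..<r}"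
    and levels: "\<forall>m<6. K_val d (a (idx m)) mod 4 = (j + level_3021 m) mod 4"
  shows "\<exists>x. (\<forall>i<r. K_cauchy d (x i)) \<and> (\<exists>i<r. \<not> K_null d (x i)) \<and> K_null d (diag4 d r a x)"
proof -
  define q where "q m = (K_val d (a (idx m)) - level_3021 m - j) div 4" for m
  have q: "K_val d (a (idx m)) - (4 * q m + j) = level_3021 m" if "m < 6" for m
  proof -
    have "\<forall>v l. v mod 4 = (j + l) mod 4 \<longrightarrow> v - (4 * ((v - l - j) div 4) + j) = (l::int)" by presburger
    thus ?thesis using levels that unfolding q_def by blast
  qed
  define A where "A m n = a (idx m) n \<cdot> pi_pow (- (4 * q m + j))" for m n
  have "\<exists>M. \<forall>n\<ge>M. \<forall>m<6. exact_val (level_3021 m) (A m n)"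
  proof (rule eventually_forall_lessThan)
    fix m :: nat assume "m < 6"
    hence "K_cauchy d (a (idx m))" "\<not> K_null d (a (idx m))" using coeffs sub by auto
    thus "\<exists>M. \<forall>n\<ge>M. exact_val (level_3021 m) (A m n)"
      using eventually_exact_val_rescaled q[OF \<open>m < 6\<close>] unfolding A_def by metis
  qed
  moreover have "\<forall>m<6. K_cauchy d (A m)"
    using coeffs sub unfolding A_def by (auto intro!: K_cauchy_mul K_cauchy_const)
  ultimately obtain Y where "\<forall>m<6. K_cauchy d (Y m)" "\<exists>m<6. \<not> K_null d (Y m)"
      "K_null d (\<lambda>n. \<Sum>m<6. A m n \<cdot> qpow4 d (Y m n))"
    using zero_level_3021_in_K by blast
  thus ?thesis using zero_of_rescaled_subform[OF inj sub] unfolding A_def by blast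
qed

end

theorem mainTheorem7:
  fixes d :: rat and a :: "nat \<Rightarrow> nat \<Rightarrow> rat \<times> rat"
  assumes "d \<in> {2, 10, -2, -10}"
    and "\<forall>i<11. K_cauchy d (a i) \<and> \<not> K_null d (a i)"
    and "of_type d 11 a 3 0 2 1"
  shows "\<exists>x :: nat \<Rightarrow> nat \<Rightarrow> rat \<times> rat.
           (\<forall>i<11. K_cauchy d (x i)) \<and> (\<exists>i<11. \<not> K_null d (x i)) \<and>
           K_null d (diag4 d 11 a x)"
proof -
  interpret Q2_sqrt d using assms(1) by unfold_locales
  obtain j :: int where
    "card {i. i < 11 \<and> K_val d (a i) mod 4 = j mod 4} \<ge> 3"
    "card {i. i < 11 \<and> K_val d (a i) mod 4 = (j + 2) mod 4} \<ge> 2"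
    "card {i. i < 11 \<and> K_val d (a i) mod 4 = (j + 3) mod 4} \<ge> 1"
    using assms(3) unfolding of_type_def by auto
  then obtain idx where "inj_on idx {..<6}" "idx ` {..<6} \<subseteq> {..<11}"
    "\<forall>m<6. K_val d (a (idx m)) mod 4 = (j + level_3021 m) mod 4"
    by (rule select_level_3021)
  thus ?thesis using zero_of_subform_3021 assms(2) by blast
qed

end
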